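(* For $x=re^{i\theta}\in C$, $$\|A^S(x)\|^2-\frac{g}{2n}\|H^S(x)\|^2=\frac{n}{2r^2}\big\{g(1-\delta^2)\csc^2 g\theta+(g-2)\big\}.$$ If moreover $m_1=m_2$ (which always holds when $g\in\{1,3,6\}$), then $$\|A^S(x)\|^2-\frac{g}{n}\|H^S(x)\|^2=\frac{n(g-1)}{r^2}.$$
   Context: Let $M^n$ be a compact isoparametric hypersurface in the unit sphere $S^{n+1}\subset\mathbb{R}^{n+2}$ (constant principal curvatures) with $g$ distinct principal curvatures; then $g\in\{1,2,3,4,6\}$. Fix $x_0\in M$ and identify the 2-dimensional normal space $\nu_{x_0}M$ of $M$ in $\mathbb{R}^{n+2}$ with $\mathbb{C}$ so that the two focal submanifolds $M_+$, $M_-$ ($\dim M_+\le\dim M_-$) meet the normal circle at $1$ and $e^{i\pi/g}$ (the intersection points closest to $x_0$). The Weyl chamber is $C=\{re^{i\theta}:r>0,\ 0<\theta<\pi/g\}$. For $k=1,\dots,g$ let $\theta_k=k\pi/g-\pi/2$, $\alpha_k=e^{i\theta_k}$, and $m_k=m_1$ for $k$ odd, $m_k=m_2$ for $k$ even, where $(m_1,m_2)$, $m_1\le m_2$, is the multiplicity data of the principal curvatures; $m_1=m_2$ if $g$ is odd, and $(m_1+m_2)g=2n$. For $x\in C$, $M_x=\{p+\tilde\xi(p):p\in M\}$ where $\tilde\xi$ is the parallel normal field on $M$ with $\tilde\xi(x_0)=x-x_0$; it is an $n$-dimensional isoparametric submanifold of $\mathbb{R}^{n+2}$ lying in $S^{n+1}(|x|)$,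 with normal space $\nu_{x_0}M$ at $x$, and $T_xM_x=\oplus_kE_k$, $\dim E_k=m_k$, with Euclidean shape operator $A_\xi|_{E_k}=\langle\xi,-\alpha_k/\langle x,\alpha_k\rangle\rangle\mathrm{Id}$ ($\langle\cdot,\cdot\rangle$ the real inner product on $\mathbb{C}=\mathbb{R}^2$). $H^E(x),A^E(x)$ denote mean curvature vector and shape operator of $M_x$ at $x$ in $\mathbb{R}^{n+2}$; $H^S(x),A^S(x)$ those of $M_x$ as a hypersurface of $S^{n+1}(|x|)$; $\|A\|^2$ is the sum of squared Hilbert–Schmidt norms over an orthonormal normal basis. Set $\delta=(m_2-m_1)/(m_2+m_1)$ if $g\ge2$ and $\delta=0$ if $g=1$, and let $\theta_{\min}\in(0,\pi/g)$ be defined by $\cos g\theta_{\min}=-\delta$. *)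

theory Defs
  imports Complex_Main
begin

text \<open>The normal space of M at x0 is identified with the complex plane; the real inner
product on it is the Euclidean one of R^2.\<close>
definition cinner :: "complex \<Rightarrow> complex \<Rightarrow> real" where
  "cinner a b = Re (a * cnj b)"

definition iso_alpha :: "nat \<Rightarrow> nat \<Rightarrow> complex" where
  "iso_alpha g k = cis (real k * pi / real g - pi / 2)"

definition iso_mult :: "nat \<Rightarrow> nat \<Rightarrow> nat \<Rightarrow> nat" where
  "iso_mult m1 m2 k = (if odd k then m1 else m2)"

text \<open>Eigenvalue of the Euclidean shape operator A_xi of M_x at x on E_k:
  A_xi restricted to E_k is  < xi, - alpha_k / <x, alpha_k> > Id.\<close>
definition iso_shape_eig :: "nat \<Rightarrow> complex \<Rightarrow> complex \<Rightarrow> nat \<Rightarrow> real" where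
  "iso_shape_eig g x \<xi> k = cinner \<xi> (- iso_alpha g k / complex_of_real (cinner x (iso_alpha g k)))"

text \<open>Unit normal of M_x inside the sphere S^{n+1}(|x|) at x: the unit vector of the
  normal plane orthogonal to the position vector x, i.e. i x / |x|.
  (The normal space of M_x in the sphere is 1-dimensional and spanned by it.)\<close>
definition sph_normal :: "complex \<Rightarrow> complex" where
  "sph_normal x = \<i> * x / complex_of_real (cmod x)"

text \<open>Shape operator of M_x as a hypersurface of the sphere: A^S = A^E_{nu}, nu the sphere
  normal; it is diagonal with eigenvalue iso_shape_eig on E_k (dim m_k).
  Squared Hilbert--Schmidt norm, computed in an orthonormal eigenbasis: sum over
  k of m_k * eigenvalue^2.\<close>
definition AS_normsq :: "nat \<Rightarrow> nat \<Rightarrow> nat \<Rightarrow> complex \<Rightarrow> real" where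
  "AS_normsq g m1 m2 x =
     (\<Sum>k=1..g. real (iso_mult m1 m2 k) * (iso_shape_eig g x (sph_normal x) k)^2)"

text \<open>Mean curvature vector H^S = (trace A^S) nu, as a vector of the normal plane.\<close>
definition HS :: "nat \<Rightarrow> nat \<Rightarrow> nat \<Rightarrow> complex \<Rightarrow> complex" where
  "HS g m1 m2 x =
     complex_of_real (\<Sum>k=1..g. real (iso_mult m1 m2 k) * iso_shape_eig g x (sph_normal x) k)
       * sph_normal x"

definition iso_delta :: "nat \<Rightarrow> nat \<Rightarrow> nat \<Rightarrow> real" where
  "iso_delta g m1 m2 = (if g \<ge> 2 then (real m2 - real m1) / (real m2 + real m1) else 0)"

end

theory Submission
  imports Defs
begin

text \<open>At x = r e^{i\<theta>} the shape operator A^S acts on E_k as -cot (\<theta> - k\<pi>/g) / r, so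
  \<parallel>A^S\<parallel>^2 and \<parallel>H^S\<parallel>^2 are weighted sums of these cotangents and their squares.
  Indices of equal parity give angles u - j\<pi>/h, j = 1..h, with h = g/2 (u = \<theta> + \<pi>/g for
  odd k, u = \<theta> for even k), or h = g when all multiplicities agree; for such a family
  \<Sum> cot = h cot (h u) and \<Sum> cot^2 = h^2 / sin^2 (h u) - h. What remains is a rational
  identity in sin (h\<theta>) and cos (h\<theta>).\<close>

lemma cinner_div_of_real: "cinner u (v / complex_of_real c) = cinner u v / c"
  unfolding cinner_def by (simp add: divide_simps)

lemma cinner_minus_right: "cinner u (- v) = - cinner u v"
  unfolding cinner_def by simp

lemma iso_shape_eig_sph_normal:
  assumes "0 < r" and "x = complex_of_real r * cis t"
  shows "iso_shape_eig g x (sph_normal x) k = - cot (t - real k * pi / real g) / r"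
proof -
  define b where "b = t - real k * pi / real g"
  have "cmod x = r" using assms by (simp add: norm_mult)
  then have normal: "sph_normal x = \<i> * cis t"
    using assms unfolding sph_normal_def by simp
  have alpha: "iso_alpha g k = cis (t - b - pi/2)"
    unfolding iso_alpha_def b_def by (simp add: algebra_simps)
  have x_alpha: "cinner x (iso_alpha g k) = - r * sin b"
  proof -
    have rot: "x * cnj (iso_alpha g k) = complex_of_real r * cis (b + pi/2)"
      unfolding alpha assms(2) by (simp add: cis_cnj mult.assoc cis_mult add.commute)
    show ?thesis unfolding cinner_def by (simp only: rot) (simp add: cos_add)
  qed
  have normal_alpha: "cinner (\<i> * cis t) (cis (t - b - pi/2)) = - cos b"
  proof -
    have rot: "\<i> * cis t * cnj (cis (t - b - pi/2)) = \<i> * cis (b + pi/2)"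
      by (simp add: cis_cnj mult.assoc cis_mult add.commute)
    show ?thesis unfolding cinner_def by (simp only: rot) (simp add: sin_add)
  qed
  have "iso_shape_eig g x (sph_normal x) k
      = cinner (\<i> * cis t) (- cis (t - b - pi/2) / complex_of_real (- r * sin b))"
    unfolding iso_shape_eig_def normal x_alpha unfolding alpha ..
  also have "\<dots> = cos b / (- r * sin b)"
    by (simp only: cinner_div_of_real cinner_minus_right normal_alpha)
  finally show ?thesis
    unfolding cot_def b_def[symmetric] by (simp add: field_simps)
qed

lemma AS_normsq_polar:
  assumes "0 < r" and "x = complex_of_real r * cis t"
  shows "AS_normsq g m1 m2 x
           = (\<Sum>k=1..g. real (iso_mult m1 m2 k) * cot (t - real k * pi / real g) ^ 2) / r^2"
  unfolding AS_normsq_def iso_shape_eig_sph_normal[OF assms]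
  by (simp add: power_divide sum_divide_distrib)

lemma HS_norm_sq_polar:
  assumes "0 < r" and "x = complex_of_real r * cis t"
  shows "cmod (HS g m1 m2 x) ^ 2
           = (\<Sum>k=1..g. real (iso_mult m1 m2 k) * cot (t - real k * pi / real g)) ^ 2 / r^2"
proof -
  have "cmod x = r" using assms by (simp add: norm_mult)
  then have "cmod (sph_normal x) = 1"
    using assms unfolding sph_normal_def by (simp add: norm_mult)
  moreover have "(\<Sum>k=1..g. real (iso_mult m1 m2 k) * iso_shape_eig g x (sph_normal x) k)
      = - (\<Sum>k=1..g. real (iso_mult m1 m2 k) * cot (t - real k * pi / real g)) / r"
    unfolding iso_shape_eig_sph_normal[OF assms] by (simp add: sum_divide_distrib sum_negf)
  ultimately show ?thesis
    unfolding HS_def norm_mult norm_of_real by (simp add: power_divide)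
qed

lemma sin_diff_multiple_pi_nonzero:
  assumes "sin (real h * u) \<noteq> 0"
  shows "sin (u - real k * pi / real h) \<noteq> 0"
proof
  assume "sin (u - real k * pi / real h) = 0"
  then obtain i :: int where i: "u - real k * pi / real h = of_int i * pi"
    by (auto simp: sin_zero_iff_int2)
  have "h \<noteq> 0" using assms by (cases "h = 0") simp_all
  with i have "real h * u = of_int (int h * i + int k) * pi"
    by (simp add: field_simps)
  with assms show False by (simp only: sin_zero_iff_int2) blast
qed

lemma cot_mult_sin: "sin x \<noteq> 0 \<Longrightarrow> cot x * sin x = (cos x :: real)"
  by (simp add: cot_def)

lemma cot_equidistant_1:
  fixes u :: real
  assumes "sin (u - pi) \<noteq> 0"
  shows "cot (u - pi) * sin u = cos u"
    and "cot (u - pi) ^ 2 * sin u ^ 2 = 1 - sin u ^ 2"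
proof -
  note cot1 = cot_mult_sin[OF assms]
  define s c where "s = sin u" and "c = cos u"
  have pyth: "s^2 + c^2 = 1" unfolding s_def c_def by simp
  note expand = sin_diff cos_diff sin_pi cos_pi
  show "cot (u - pi) * sin u = cos u"
    using cot1 assms unfolding expand s_def[symmetric] c_def[symmetric] using pyth by algebra
  show "cot (u - pi) ^ 2 * sin u ^ 2 = 1 - sin u ^ 2"
    using cot1 assms unfolding expand s_def[symmetric] c_def[symmetric] using pyth by algebra
qed

lemma cot_equidistant_2:
  fixes u :: real
  assumes "sin (u - pi/2) \<noteq> 0" and "sin (u - pi) \<noteq> 0"
  shows "(cot (u - pi/2) + cot (u - pi)) * sin (2*u) = 2 * cos (2*u)"
    and "(cot (u - pi/2) ^ 2 + cot (u - pi) ^ 2) * sin (2*u) ^ 2 = 4 - 2 * sin (2*u) ^ 2"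
proof -
  note cot1 = cot_mult_sin[OF assms(1)] and cot2 = cot_mult_sin[OF assms(2)]
  define s c where "s = sin u" and "c = cos u"
  have pyth: "s^2 + c^2 = 1" unfolding s_def c_def by simp
  note expand = sin_diff cos_diff sin_double cos_double sin_pi cos_pi sin_pi_half cos_pi_half
  show "(cot (u - pi/2) + cot (u - pi)) * sin (2*u) = 2 * cos (2*u)"
    using cot1 cot2 assms unfolding expand s_def[symmetric] c_def[symmetric]
    using pyth by algebra
  show "(cot (u - pi/2) ^ 2 + cot (u - pi) ^ 2) * sin (2*u) ^ 2 = 4 - 2 * sin (2*u) ^ 2"
    using cot1 cot2 assms unfolding expand s_def[symmetric] c_def[symmetric]
    using pyth by algebra
qed

lemma cot_equidistant_3:
  fixes u :: real
  assumes "sin (u - pi/3) \<noteq> 0" and "sin (u - 2*pi/3) \<noteq> 0" and "sin (u - pi) \<noteq> 0"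
  shows "(cot (u - pi/3) + cot (u - 2*pi/3) + cot (u - pi)) * sin (3*u) = 3 * cos (3*u)"
    and "(cot (u - pi/3) ^ 2 + cot (u - 2*pi/3) ^ 2 + cot (u - pi) ^ 2) * sin (3*u) ^ 2
           = 9 - 3 * sin (3*u) ^ 2"
proof -
  note cot1 = cot_mult_sin[OF assms(1)] and cot2 = cot_mult_sin[OF assms(2)]
    and cot3 = cot_mult_sin[OF assms(3)]
  have "2*pi/3 = pi - pi/3" by simp
  then have trig_2pi3: "cos (2*pi/3) = -1/2" "sin (2*pi/3) = sqrt 3/2"
    by (simp_all only: cos_pi_minus sin_pi_minus cos_60 sin_60)
  have sin_3u: "sin (3*u) = 2 * sin u * cos u ^ 2 + (cos u ^ 2 - sin u ^ 2) * sin u"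
    using sin_add[of "2*u" u] by (simp add: sin_double cos_double power2_eq_square)
  define s c q where "s = sin u" and "c = cos u" and "q = sqrt 3"
  have pyth: "s^2 + c^2 = 1" and q: "q^2 = 3" unfolding s_def c_def q_def by simp_all
  note expand = sin_diff cos_diff cos_60 sin_60 trig_2pi3 sin_3u cos_treble_cos sin_pi cos_pi
  show "(cot (u - pi/3) + cot (u - 2*pi/3) + cot (u - pi)) * sin (3*u) = 3 * cos (3*u)"
    using cot1 cot2 cot3 assms
    unfolding expand s_def[symmetric] c_def[symmetric] q_def[symmetric]
    using pyth q by algebra
  show "(cot (u - pi/3) ^ 2 + cot (u - 2*pi/3) ^ 2 + cot (u - pi) ^ 2) * sin (3*u) ^ 2
      = 9 - 3 * sin (3*u) ^ 2"
    using cot1 cot2 cot3 assms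
    unfolding expand s_def[symmetric] c_def[symmetric] q_def[symmetric]
    using pyth q by algebra
qed

text \<open>For every h the first identity is the logarithmic derivative of the product formula
  sin (h u) = 2^(h-1) \<Prod>k<h. sin (u + k pi/h) and the second is its derivative; only h \<le> 3
  is needed, and these cases are checked directly.\<close>
lemma sum_cot_equidistant:
  fixes u :: real
  assumes h: "h \<in> {1, 2, 3}" and nz: "sin (real h * u) \<noteq> 0"
  shows "(\<Sum>k=1..h. cot (u - real k * pi / real h)) = real h * cot (real h * u)"
    and "(\<Sum>k=1..h. cot (u - real k * pi / real h) ^ 2)
           = real h ^ 2 / sin (real h * u) ^ 2 - real h"
proof -
  note shifts = sin_diff_multiple_pi_nonzero[OF nz]
  have "(\<Sum>k=1..h. cot (u - real k * pi / real h)) * sin (real h * u) = real h * cos (real h * u)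
      \<and> (\<Sum>k=1..h. cot (u - real k * pi / real h) ^ 2) * sin (real h * u) ^ 2
          = real h ^ 2 - real h * sin (real h * u) ^ 2"
    using h
  proof (elim insertE emptyE)
    assume "h = 1"
    then show ?thesis using cot_equidistant_1 shifts[of 1] by simp
  next
    assume "h = 2"
    then show ?thesis using cot_equidistant_2 shifts[of 1] shifts[of 2]
      by (simp add: eval_nat_numeral)
  next
    assume "h = 3"
    then show ?thesis using cot_equidistant_3 shifts[of 1] shifts[of 2] shifts[of 3]
      by (simp add: eval_nat_numeral)
  qed
  then show "(\<Sum>k=1..h. cot (u - real k * pi / real h)) = real h * cot (real h * u)"
    and "(\<Sum>k=1..h. cot (u - real k * pi / real h) ^ 2)
           = real h ^ 2 / sin (real h * u) ^ 2 - real h"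
    using nz by (auto simp: cot_def field_simps)
qed

lemma sum_odd_even_split:
  fixes f :: "nat \<Rightarrow> 'a::comm_monoid_add"
  shows "(\<Sum>k=1..2*h. f k) = (\<Sum>j=1..h. f (2*j - 1)) + (\<Sum>j=1..h. f (2*j))"
  by (induction h) (simp_all add: ac_simps)

lemma sum_iso_mult_split:
  fixes f :: "real \<Rightarrow> real"
  assumes "0 < h"
  shows "(\<Sum>k=1..2*h. real (iso_mult m1 m2 k) * f (cot (t - real k * pi / real (2*h))))
    = real m1 * (\<Sum>j=1..h. f (cot (t + pi / real (2*h) - real j * pi / real h)))
      + real m2 * (\<Sum>j=1..h. f (cot (t - real j * pi / real h)))"
proof -
  have odd_angle:
    "t - (2 * real j - 1) * pi / (2 * real h) = t + pi / real (2*h) - real j * pi / real h" for j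
    using assms by (simp add: field_simps)
  have even_angle: "t - real (2*j) * pi / real (2*h) = t - real j * pi / real h" for j
    using assms by (simp add: field_simps)
  show ?thesis
    unfolding sum_odd_even_split sum_distrib_left
    by (intro arg_cong2[where f = "(+)"] sum.cong) (auto simp: iso_mult_def odd_angle even_angle)
qed

lemma AS_normsq_HS_even:
  assumes h: "h \<in> {1, 2, 3}" and r: "0 < r" and x: "x = complex_of_real r * cis t"
    and t: "0 < t" "t < pi / real (2*h)"
  shows "AS_normsq (2*h) m1 m2 x
           = (real m1 * (real h ^ 2 / cos (real h * t) ^ 2 - real h)
              + real m2 * (real h ^ 2 / sin (real h * t) ^ 2 - real h)) / r^2"
    and "cmod (HS (2*h) m1 m2 x) ^ 2
           = (real m2 * (real h * cot (real h * t)) - real m1 * (real h * tan (real h * t))) ^ 2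
               / r^2"
proof -
  have h0: "0 < h" using h by auto
  define u where "u = t + pi / real (2*h)"
  have "real h * u = real h * t + pi/2"
    using h0 unfolding u_def by (simp add: field_simps)
  then have sin_hu: "sin (real h * u) = cos (real h * t)"
    and cot_hu: "cot (real h * u) = - tan (real h * t)"
    by (simp_all add: cot_def tan_def sin_add cos_add)
  have ht: "0 < real h * t" "real h * t < pi/2"
    using t h0 by (simp_all add: field_simps)
  then have sin_ht: "sin (real h * t) \<noteq> 0" and cos_ht: "cos (real h * t) \<noteq> 0"
    using sin_gt_zero[of "real h * t"] cos_gt_zero[of "real h * t"] by auto
  note odd_class = sum_cot_equidistant[OF h, of u, unfolded sin_hu cot_hu, OF cos_ht]
    and even_class = sum_cot_equidistant[OF h sin_ht]
  show "AS_normsq (2*h) m1 m2 x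
           = (real m1 * (real h ^ 2 / cos (real h * t) ^ 2 - real h)
              + real m2 * (real h ^ 2 / sin (real h * t) ^ 2 - real h)) / r^2"
    using sum_iso_mult_split[OF h0, of m1 m2 "\<lambda>y. y ^ 2" t] odd_class even_class
    by (simp add: AS_normsq_polar[OF r x] u_def)
  show "cmod (HS (2*h) m1 m2 x) ^ 2
           = (real m2 * (real h * cot (real h * t)) - real m1 * (real h * tan (real h * t))) ^ 2
               / r^2"
    using sum_iso_mult_split[OF h0, of m1 m2 "\<lambda>y. y" t] odd_class even_class
    by (simp add: HS_norm_sq_polar[OF r x] u_def)
qed

lemma AS_normsq_HS_equal_multiplicities:
  assumes g: "g \<in> {1, 2, 3}" and r: "0 < r" and x: "x = complex_of_real r * cis t"
    and nz: "sin (real g * t) \<noteq> 0"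
  shows "AS_normsq g m m x = real m * (real g ^ 2 / sin (real g * t) ^ 2 - real g) / r^2"
    and "cmod (HS g m m x) ^ 2 = (real m * (real g * cot (real g * t))) ^ 2 / r^2"
  using sum_cot_equidistant[OF g nz]
  by (simp_all add: AS_normsq_polar[OF r x] HS_norm_sq_polar[OF r x] iso_mult_def
      sum_distrib_left[symmetric])

lemma curvature_gap_two_classes:
  fixes m1 m2 h r S C :: real
  assumes pyth: "S^2 + C^2 = 1"
    and nz: "S \<noteq> 0" "C \<noteq> 0" "r \<noteq> 0" "h \<noteq> 0" "m1 + m2 \<noteq> 0"
  defines "A \<equiv> (m1 * (h^2 / C^2 - h) + m2 * (h^2 / S^2 - h)) / r^2"
    and "H \<equiv> (m2 * (h * (C / S)) - m1 * (h * (S / C)))^2 / r^2"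
    and "n \<equiv> (m1 + m2) * h"
  shows "A - 2*h / (2*n) * H
           = n / (2*r^2) * (2*h * (1 - ((m2 - m1) / (m2 + m1))^2) / (2*S*C)^2 + (2*h - 2))"
    and "m1 = m2 \<Longrightarrow> A - 2*h / n * H = n * (2*h - 1) / r^2"
proof -
  \<comment> \<open>an atom M for m1 + m2, so that field_simps sees the denominator as nonzero\<close>
  obtain M where M: "m1 + m2 = M" and M0: "M \<noteq> 0" using nz by blast
  have rel: "S^2 + C^2 - 1 = 0" "m1 + m2 - M = 0" using pyth M by simp_all
  have n: "n = M * h" and ratio: "2*h / (2*n) = 1 / M" "2*h / n = 2 / M" "m2 + m1 = M"
    using nz M0 M unfolding n_def by simp_all
  have "A - 2*h / (2*n) * H
      - n / (2*r^2) * (2*h * (1 - ((m2 - m1) / (m2 + m1))^2) / (2*S*C)^2 + (2*h - 2)) = 0"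
    using nz M0 unfolding ratio unfolding A_def H_def n
    by (simp add: field_simps) (use rel in algebra)
  then show "A - 2*h / (2*n) * H
      = n / (2*r^2) * (2*h * (1 - ((m2 - m1) / (m2 + m1))^2) / (2*S*C)^2 + (2*h - 2))"
    by simp
  assume equal: "m1 = m2"
  with M have M2: "2 * m2 - M = 0" by simp
  have "A - 2*h / n * H - n * (2*h - 1) / r^2 = 0"
    using nz(1-4) M0 unfolding ratio unfolding A_def H_def n equal
    by (simp add: field_simps) (use rel(1) M2 in algebra)
  then show "A - 2*h / n * H = n * (2*h - 1) / r^2"
    by simp
qed

lemma curvature_gap_one_class:
  fixes m g r S C :: real
  assumes pyth: "S^2 + C^2 = 1" and nz: "S \<noteq> 0" "r \<noteq> 0" "m \<noteq> 0" "g \<noteq> 0"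
  defines "A \<equiv> m * (g^2 / S^2 - g) / r^2"
    and "H \<equiv> (m * (g * (C / S)))^2 / r^2"
    and "n \<equiv> m * g"
  shows "A - g / (2*n) * H = n / (2*r^2) * (g / S^2 + (g - 2))"
    and "A - g / n * H = n * (g - 1) / r^2"
proof -
  have pyth0: "S^2 + C^2 - 1 = 0" using pyth by simp
  have ratio: "g / (2*n) = 1 / (2*m)" "g / n = 1 / m"
    using nz unfolding n_def by simp_all
  have "A - g / (2*n) * H - n / (2*r^2) * (g / S^2 + (g - 2)) = 0"
    using nz unfolding ratio unfolding A_def H_def n_def
    by (simp add: field_simps) (use pyth0 in algebra)
  then show "A - g / (2*n) * H = n / (2*r^2) * (g / S^2 + (g - 2))"
    by simp
  have "A - g / n * H - n * (g - 1) / r^2 = 0"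
    using nz unfolding ratio unfolding A_def H_def n_def
    by (simp add: field_simps) (use pyth0 in algebra)
  then show "A - g / n * H = n * (g - 1) / r^2"
    by simp
qed

lemma curvature_identities_even:
  assumes g: "g = 2*h" and h: "h \<in> {1, 2, 3}" and m1: "1 \<le> m1"
    and n: "(m1 + m2) * g = 2 * n"
    and r: "0 < r" and t: "0 < t" "t < pi / real g"
    and x: "x = complex_of_real r * cis t"
  shows "AS_normsq g m1 m2 x - real g / (2 * real n) * (cmod (HS g m1 m2 x))^2
           = real n / (2 * r^2) * (real g * (1 - (iso_delta g m1 m2)^2) / (sin (real g * t))^2
                                   + (real g - 2))
         \<and> (m1 = m2 \<longrightarrow>
           AS_normsq g m1 m2 x - real g / real n * (cmod (HS g m1 m2 x))^2
             = real n * (real g - 1) / r^2)"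
proof -
  define S C where "S = sin (real h * t)" and "C = cos (real h * t)"
  have g_real: "real g = 2 * real h" using g by simp
  from n g have n_real: "real n = (real m1 + real m2) * real h"
    by (simp add: algebra_simps flip: of_nat_add of_nat_mult)
  have delta: "iso_delta g m1 m2 = (real m2 - real m1) / (real m2 + real m1)"
    using h g unfolding iso_delta_def by auto
  have "0 < real h * t" "real h * t < pi/2"
    using t h g by (auto simp: field_simps)
  then have S: "S \<noteq> 0" and C: "C \<noteq> 0"
    unfolding S_def C_def using sin_gt_zero cos_gt_zero by fastforce+
  have sin_g: "sin (2 * real h * t) = 2 * S * C"
    unfolding S_def C_def using sin_double[of "real h * t"] by (simp add: mult.assoc)
  note curv = AS_normsq_HS_even[OF h r x t(1), of m1 m2, folded g S_def C_def]
  have AS: "AS_normsq g m1 m2 x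
      = (real m1 * (real h^2 / C^2 - real h) + real m2 * (real h^2 / S^2 - real h)) / r^2"
    using curv(1) t(2) g by simp
  have HS: "cmod (HS g m1 m2 x) ^ 2
      = (real m2 * (real h * (C / S)) - real m1 * (real h * (S / C)))^2 / r^2"
    using curv(2) t(2) g by (simp add: tan_def cot_def S_def C_def)
  have pyth: "S^2 + C^2 = 1" unfolding S_def C_def by simp
  have "r \<noteq> 0" "real h \<noteq> 0" "real m1 + real m2 \<noteq> 0" using r h m1 by auto
  note gap = curvature_gap_two_classes[OF pyth S C this]
  show ?thesis
    unfolding AS HS g_real n_real delta sin_g using gap by simp
qed

lemma curvature_identities_equal_multiplicities:
  assumes g: "g \<in> {1, 2, 3}" and m: "1 \<le> m" and n: "(m + m) * g = 2 * n"
    and r: "0 < r" and t: "0 < t" "t < pi / real g"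
    and x: "x = complex_of_real r * cis t"
  shows "AS_normsq g m m x - real g / (2 * real n) * (cmod (HS g m m x))^2
           = real n / (2 * r^2) * (real g * (1 - (iso_delta g m m)^2) / (sin (real g * t))^2
                                   + (real g - 2))
         \<and> (m = m \<longrightarrow>
           AS_normsq g m m x - real g / real n * (cmod (HS g m m x))^2
             = real n * (real g - 1) / r^2)"
proof -
  define S C where "S = sin (real g * t)" and "C = cos (real g * t)"
  from n have n_real: "real n = real m * real g"
    by (simp add: algebra_simps flip: of_nat_add of_nat_mult)
  have "sin (real g * t) \<noteq> 0"
    using t g sin_gt_zero[of "real g * t"] by (auto simp: field_simps)
  note curv = AS_normsq_HS_equal_multiplicities[OF g r x this, of m, folded S_def]
  have HS: "cmod (HS g m m x) ^ 2 = (real m * (real g * (C / S))) ^ 2 / r^2"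
    using curv(2) by (simp add: cot_def S_def C_def)
  have pyth: "S^2 + C^2 = 1" unfolding S_def C_def by simp
  have "S \<noteq> 0" "r \<noteq> 0" "real m \<noteq> 0" "real g \<noteq> 0"
    using \<open>sin (real g * t) \<noteq> 0\<close> r m g unfolding S_def by auto
  note gap = curvature_gap_one_class[OF pyth this]
  show ?thesis
    unfolding curv(1) HS n_real S_def[symmetric] using gap by (simp add: iso_delta_def)
qed

theorem lemma4p11:
  fixes g m1 m2 n :: nat and r \<theta> :: real and x :: complex
  assumes hg: "g \<in> {1, 2, 3, 4, 6}"
    and hm1: "1 \<le> m1" and hm12: "m1 \<le> m2"
    and hodd: "odd g \<Longrightarrow> m1 = m2"
    and hn: "(m1 + m2) * g = 2 * n"
    and hr: "0 < r" and ht0: "0 < \<theta>" and ht1: "\<theta> < pi / real g"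
    and hx: "x = complex_of_real r * cis \<theta>"
  shows "AS_normsq g m1 m2 x - real g / (2 * real n) * (cmod (HS g m1 m2 x))^2
           = real n / (2 * r^2) * (real g * (1 - (iso_delta g m1 m2)^2) / (sin (real g * \<theta>))^2
                                   + (real g - 2))
         \<and> (m1 = m2 \<longrightarrow>
           AS_normsq g m1 m2 x - real g / real n * (cmod (HS g m1 m2 x))^2
             = real n * (real g - 1) / r^2)"
proof (cases "even g")
  case True
  then obtain h where g: "g = 2*h" by blast
  with hg have "h \<in> {1, 2, 3}" by auto
  from curvature_identities_even[OF g this hm1 hn hr ht0 ht1 hx] show ?thesis .
next
  case False
  with hodd hg have "m1 = m2" and "g \<in> {1, 2, 3}" by auto
  with curvature_identities_equal_multiplicities[OF _ hm1 _ hr ht0 ht1 hx] hn show ?thesis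
    by auto
qed

end
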